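(* Let $G$ be Boidol's group and consider the coadjoint orbit space $\mathfrak{g}^*/G$ with its quotient topology, partitioned into the sets $\Gamma_3,\Gamma_2,\Gamma_1,\Gamma_0$ described in the context. Then: (i) the relative topology of $\mathfrak{g}^*/G$ on $\Gamma_3$ is Hausdorff; (ii) each of the four subsets $\Gamma_{2,\varepsilon,\sigma}$, $\varepsilon,\sigma\in\{+,-\}$, is open in $\Gamma_2$ and Hausdorff in its relative topology; (iii) $\Gamma_1$ is discrete in its relative topology; (iv) $\Gamma_0$ is homeomorphic to $\mathbb{R}$ (via $\tau\mapsto\{\tau T^*\}$).
   Context: Boidol's group $G$ is the simply connected Lie group with Lie algebra $\mathfrak{g}$ having basis $T,X,Y,Z$ and non-trivial brackets $[T,X]=-X$, $[T,Y]=Y$, $[X,Y]=Z$; concretely $G=\mathbb{R}^4$ with product $(t,x,y,z)\cdot(t',x',y',z')=(t+t',\,e^{t'}x+x',\,e^{-t'}y+y',\,z+z'+\tfrac12(e^{t'}xy'-e^{-t'}x'y))$. Write elements of $\mathfrak{g}^*$ as $aT^*+bX^*+cY^*+dZ^*$ (dual basis). $G$ acts on $\mathfrak{g}^*$ by the coadjoint action, and the coadjoint orbits are exactly: (1) for $\rho\in\mathbb{R},\lambda\in\mathbb{R}\setminus\{0\}$: $O_{\rho,\lambda}=\{\frac{\rho\lambda+xy}{\lambda}T^*+xX^*+yY^*+\lambda Z^*: x,y\in\mathbb{R}\}$; (2) for $(\alpha,\beta)\in\mathbb{R}^2\setminus\{0\}$: $O_{\alpha,\beta,0}=\{uT^*+e^t\alpha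 X^*+e^{-t}\beta Y^*: t,u\in\mathbb{R}\}$; (3) for $\tau\in\mathbb{R}$ the singletons $\{\tau T^*\}$. Set $\Gamma_3=\{O_{\rho,\lambda}:\rho\in\mathbb{R},\lambda\neq0\}$; for $\varepsilon,\sigma\in\{+,-\}$ (identified with $\pm1$), $\Gamma_{2,\varepsilon,\sigma}=\{O_{\varepsilon\rho,\sigma,0}:\rho>0\}$ and $\Gamma_2=\bigcup_{\varepsilon,\sigma}\Gamma_{2,\varepsilon,\sigma}$ (the orbits $O_{\alpha,\beta,0}$ with $\alpha\beta\neq0$); $\Gamma_1=\{O_{1,0,0},O_{-1,0,0},O_{0,1,0},O_{0,-1,0}\}$; $\Gamma_0=\{\{\tau T^*\}:\tau\in\mathbb{R}\}$. The orbit space $\mathfrak{g}^*/G$ carries the quotient topology of $\mathfrak{g}^*$. *)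

theory Defs
  imports "HOL-Analysis.Analysis"
begin

definition quotient_topology :: "'a topology \<Rightarrow> ('a \<Rightarrow> 'b) \<Rightarrow> 'b topology" where
  "quotient_topology X f =
     topology (\<lambda>U. U \<subseteq> f ` topspace X \<and> openin X {x \<in> topspace X. f x \<in> U})"

lemma istopology_quotient_topology:
  "istopology (\<lambda>U. U \<subseteq> f ` topspace X \<and> openin X {x \<in> topspace X. f x \<in> U})"
  unfolding istopology_def
proof (rule conjI; intro allI impI)
  fix S T assume S: "S \<subseteq> f ` topspace X \<and> openin X {x \<in> topspace X. f x \<in> S}"
    and T: "T \<subseteq> f ` topspace X \<and> openin X {x \<in> topspace X. f x \<in> T}"
  have e: "{x \<in> topspace X. f x \<in> S \<inter> T} = {x \<in> topspace X. f x \<in> S} \<inter> {x \<in> topspace X. f x \<in> T}" by auto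
  have "openin X ({x \<in> topspace X. f x \<in> S} \<inter> {x \<in> topspace X. f x \<in> T})"
    using S T by (intro openin_Int) auto
  with S T e show "S \<inter> T \<subseteq> f ` topspace X \<and> openin X {x \<in> topspace X. f x \<in> S \<inter> T}"
    by (metis le_infI1)
next
  fix K assume K: "\<forall>S\<in>K. S \<subseteq> f ` topspace X \<and> openin X {x \<in> topspace X. f x \<in> S}"
  then have "openin X (\<Union>S\<in>K. {x \<in> topspace X. f x \<in> S})" by (intro openin_Union) auto
  moreover have "(\<Union>S\<in>K. {x \<in> topspace X. f x \<in> S}) = {x \<in> topspace X. f x \<in> \<Union>K}" by auto
  ultimately show "\<Union>K \<subseteq> f ` topspace X \<and> openin X {x \<in> topspace X. f x \<in> \<Union>K}" using K by auto
qed

lemma openin_quotient_topology: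
  "openin (quotient_topology X f) U \<longleftrightarrow>
     U \<subseteq> f ` topspace X \<and> openin X {x \<in> topspace X. f x \<in> U}"
  unfolding quotient_topology_def by (simp add: topology_inverse'[OF istopology_quotient_topology])

text \<open>Elements of the dual g* written as (a,b,c,d) = a T* + b X* + c Y* + d Z*.\<close>
type_synonym gdual = "real \<times> real \<times> real \<times> real"

definition orbit3 :: "real \<Rightarrow> real \<Rightarrow> gdual set" where
  "orbit3 \<rho> lam = {((\<rho> * lam + x * y) / lam, x, y, lam) | x y. True}"

definition orbit2 :: "real \<Rightarrow> real \<Rightarrow> gdual set" where
  "orbit2 \<alpha> \<beta> = {(u, exp t * \<alpha>, exp (- t) * \<beta>, 0) | t u. True}"

definition orbit0 :: "real \<Rightarrow> gdual set" where
  "orbit0 \<tau> = {(\<tau>, 0, 0, 0)}"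

definition coadjoint_orbits :: "gdual set set" where
  "coadjoint_orbits =
     {orbit3 \<rho> lam | \<rho> lam. lam \<noteq> 0} \<union> {orbit2 \<alpha> \<beta> | \<alpha> \<beta>. (\<alpha>, \<beta>) \<noteq> (0, 0)} \<union> range orbit0"

definition orbit_of :: "gdual \<Rightarrow> gdual set" where
  "orbit_of l = (THE Q. Q \<in> coadjoint_orbits \<and> l \<in> Q)"

definition orbit_space :: "gdual set topology" where
  "orbit_space = quotient_topology euclidean orbit_of"

definition Gamma3 :: "gdual set set" where
  "Gamma3 = {orbit3 \<rho> lam | \<rho> lam. lam \<noteq> 0}"

definition Gamma2es :: "real \<Rightarrow> real \<Rightarrow> gdual set set" where
  "Gamma2es \<epsilon> \<sigma> = {orbit2 (\<epsilon> * \<rho>) \<sigma> | \<rho>. \<rho> > 0}"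

definition Gamma2 :: "gdual set set" where
  "Gamma2 = (\<Union>\<epsilon>\<in>{1, -1}. \<Union>\<sigma>\<in>{1, -1}. Gamma2es \<epsilon> \<sigma>)"

definition Gamma1 :: "gdual set set" where
  "Gamma1 = {orbit2 1 0, orbit2 (-1) 0, orbit2 0 1, orbit2 0 (-1)}"

definition Gamma0 :: "gdual set set" where
  "Gamma0 = range orbit0"

end

theory Submission
  imports Defs
begin

(* The functions d and a d - b c on g* are constant on every coadjoint orbit (they take the values
   \<lambda> and \<rho>\<lambda> on O_{\<rho>,\<lambda>}, and 0 and -\<alpha>\<beta> on O_{\<alpha>,\<beta>,0}).  Being continuous, they descend to a
   continuous map on the orbit space, and since they separate the orbits of \<Gamma>_3 and of each
   \<Gamma>_{2,\<epsilon>,\<sigma>}, these subspaces are Hausdorff.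
   The other statements need open sets of the orbit space, i.e. open saturated subsets of g*.  A set
   containing the whole region d \<noteq> 0 is saturated as soon as, in the plane d = 0, it is invariant
   under (b, c) \<mapsto> (e^t b, e^-t c) and, off the T*-axis, under changing a.  Completing the half-spaces
   \<epsilon> b > 0 and \<sigma> c > 0, and the sets "(b, c) \<noteq> 0 or a \<in> V", by the region d \<noteq> 0 gives such sets;
   they cut out \<Gamma>_{2,\<epsilon>,\<sigma>} from \<Gamma>_2, the single points of \<Gamma>_1, and the images of open sets V
   under \<tau> \<mapsto> {\<tau> T*} in \<Gamma>_0. *)

lemma topspace_quotient_topology: "topspace (quotient_topology X f) = f ` topspace X"
proof
  show "topspace (quotient_topology X f) \<subseteq> f ` topspace X"
    unfolding topspace_def openin_quotient_topology by blast
  have "{x \<in> topspace X. f x \<in> f ` topspace X} = topspace X"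
    by blast
  then have "openin (quotient_topology X f) (f ` topspace X)"
    unfolding openin_quotient_topology by simp
  then show "f ` topspace X \<subseteq> topspace (quotient_topology X f)"
    by (rule openin_subset)
qed

lemma quotient_map_quotient_topology: "quotient_map X (quotient_topology X f) f"
  unfolding quotient_map_def topspace_quotient_topology openin_quotient_topology by auto

lemma Hausdorff_space_subtopology_quotient_map:
  assumes f: "quotient_map X Y f" and h: "continuous_map X Z h" and Z: "Hausdorff_space Z"
    and invariant: "\<And>x y. \<lbrakk>x \<in> topspace X; y \<in> topspace X; f x = f y\<rbrakk> \<Longrightarrow> h x = h y"
    and separating: "\<And>x y. \<lbrakk>x \<in> topspace X; y \<in> topspace X; f x \<in> S; f y \<in> S; h x = h y\<rbrakk> \<Longrightarrow> f x = f y"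
  shows "Hausdorff_space (subtopology Y S)"
proof -
  obtain g where g: "continuous_map Y Z g" and gf: "\<And>x. x \<in> topspace X \<Longrightarrow> g (f x) = h x"
    using quotient_map_lift_exists[OF f h] invariant by metis
  have "inj_on g (topspace (subtopology Y S))"
  proof (rule inj_onI)
    fix Q Q' assume "Q \<in> topspace (subtopology Y S)" "Q' \<in> topspace (subtopology Y S)" "g Q = g Q'"
    moreover have "topspace Y = f ` topspace X"
      using quotient_imp_surjective_map[OF f] by simp
    ultimately obtain x x' where "x \<in> topspace X" "x' \<in> topspace X" "Q = f x" "Q' = f x'"
      "f x \<in> S" "f x' \<in> S" "h x = h x'"
      by (auto simp: gf)
    then show "Q = Q'"
      using separating by blast
  qed
  then show ?thesis
    using Hausdorff_space_injective_preimage[OF Z] continuous_map_from_subtopology[OF g] by blast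
qed

lemma mem_orbit3: "lam \<noteq> 0 \<Longrightarrow> (a, b, c, d) \<in> orbit3 \<rho> lam \<longleftrightarrow> d = lam \<and> a - b * c / lam = \<rho>"
  unfolding orbit3_def by (auto simp: field_simps)

lemma mem_orbit2: "(a, b, c, d) \<in> orbit2 \<alpha> \<beta> \<longleftrightarrow> d = 0 \<and> (\<exists>t. b = exp t * \<alpha> \<and> c = exp (- t) * \<beta>)"
  unfolding orbit2_def by auto

lemma orbit2_exp_scale: "orbit2 (exp t * \<alpha>) (exp (- t) * \<beta>) = orbit2 \<alpha> \<beta>"
proof -
  have "(\<exists>s. b = exp s * (exp t * \<alpha>) \<and> c = exp (- s) * (exp (- t) * \<beta>))
    \<longleftrightarrow> (\<exists>s. b = exp s * \<alpha> \<and> c = exp (- s) * \<beta>)" for b c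
  proof
    assume "\<exists>s. b = exp s * (exp t * \<alpha>) \<and> c = exp (- s) * (exp (- t) * \<beta>)"
    then obtain s where "b = exp s * (exp t * \<alpha>)" "c = exp (- s) * (exp (- t) * \<beta>)"
      by blast
    then show "\<exists>s. b = exp s * \<alpha> \<and> c = exp (- s) * \<beta>"
      by (intro exI[of _ "s + t"]) (simp add: exp_add exp_diff exp_minus field_simps)
  next
    assume "\<exists>s. b = exp s * \<alpha> \<and> c = exp (- s) * \<beta>"
    then obtain s where "b = exp s * \<alpha>" "c = exp (- s) * \<beta>"
      by blast
    then show "\<exists>s. b = exp s * (exp t * \<alpha>) \<and> c = exp (- s) * (exp (- t) * \<beta>)"
      by (intro exI[of _ "s - t"]) (simp add: exp_diff exp_minus field_simps)
  qed
  then show ?thesis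
    by (auto simp: mem_orbit2)
qed

lemma coadjoint_orbit_determined:
  assumes "Q \<in> coadjoint_orbits" "(a, b, c, d) \<in> Q"
  shows "Q = (if d \<noteq> 0 then orbit3 (a - b * c / d) d else if b \<noteq> 0 \<or> c \<noteq> 0 then orbit2 b c else orbit0 a)"
proof -
  consider (orbit3) \<rho> lam where "lam \<noteq> 0" "Q = orbit3 \<rho> lam"
    | (orbit2) \<alpha> \<beta> where "(\<alpha>, \<beta>) \<noteq> (0, 0)" "Q = orbit2 \<alpha> \<beta>"
    | (orbit0) \<tau> where "Q = orbit0 \<tau>"
    using assms(1) unfolding coadjoint_orbits_def by blast
  then show ?thesis
  proof cases
    case orbit3
    then show ?thesis
      using assms(2) by (simp add: mem_orbit3)
  next
    case orbit2
    then obtain t where "d = 0" "b = exp t * \<alpha>" "c = exp (- t) * \<beta>"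
      using assms(2) by (auto simp: mem_orbit2)
    moreover have "b \<noteq> 0 \<or> c \<noteq> 0"
      using orbit2(1) calculation by auto
    ultimately show ?thesis
      using orbit2(2) by (simp add: orbit2_exp_scale)
  next
    case orbit0
    then show ?thesis
      using assms(2) by (simp add: orbit0_def)
  qed
qed

lemma ex_coadjoint_orbit: "\<exists>Q \<in> coadjoint_orbits. p \<in> Q"
proof (cases p)
  case (fields a b c d)
  show ?thesis
  proof (cases "d \<noteq> 0")
    case True
    then have "(a, b, c, d) \<in> orbit3 (a - b * c / d) d"
      by (simp add: mem_orbit3)
    then show ?thesis
      unfolding fields coadjoint_orbits_def using True by blast
  next
    case d: False
    show ?thesis
    proof (cases "b \<noteq> 0 \<or> c \<noteq> 0")
      case True
      then have "(a, b, c, d) \<in> orbit2 b c"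
        using d by (auto simp: mem_orbit2 intro: exI[of _ 0])
      then show ?thesis
        unfolding fields coadjoint_orbits_def using True by blast
    next
      case False
      then show ?thesis
        unfolding fields coadjoint_orbits_def using d by (auto simp: orbit0_def)
    qed
  qed
qed

lemma orbit_of_unique: "Q \<in> coadjoint_orbits \<Longrightarrow> p \<in> Q \<Longrightarrow> orbit_of p = Q"
  unfolding orbit_of_def
  by (rule the_equality) (metis coadjoint_orbit_determined prod_cases4)+

lemma orbit_of_in_coadjoint_orbits: "orbit_of p \<in> coadjoint_orbits"
  and mem_orbit_of: "p \<in> orbit_of p"
proof -
  obtain Q where "Q \<in> coadjoint_orbits" "p \<in> Q"
    using ex_coadjoint_orbit by blast
  with orbit_of_unique show "orbit_of p \<in> coadjoint_orbits" "p \<in> orbit_of p"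
    by simp_all
qed

lemma orbit2_eq_orbit_of: "(\<alpha>, \<beta>) \<noteq> (0, 0) \<Longrightarrow> orbit2 \<alpha> \<beta> = orbit_of (0, \<alpha>, \<beta>, 0)"
  by (rule orbit_of_unique[symmetric]) (auto simp: coadjoint_orbits_def mem_orbit2 intro: exI[of _ 0])

lemma orbit0_eq_orbit_of: "orbit0 \<tau> = orbit_of (\<tau>, 0, 0, 0)"
  by (rule orbit_of_unique[symmetric]) (auto simp: coadjoint_orbits_def orbit0_def)

definition orbit_invariants :: "gdual \<Rightarrow> real \<times> real" where
  "orbit_invariants = (\<lambda>(a, b, c, d). (d, a * d - b * c))"

lemma continuous_orbit_invariants: "continuous_on UNIV orbit_invariants"
  unfolding orbit_invariants_def case_prod_unfold by (intro continuous_intros)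

lemma orbit_invariants_orbit3: "lam \<noteq> 0 \<Longrightarrow> p \<in> orbit3 \<rho> lam \<Longrightarrow> orbit_invariants p = (lam, \<rho> * lam)"
  by (auto simp: orbit3_def orbit_invariants_def field_simps)

lemma orbit_invariants_orbit2: "p \<in> orbit2 \<alpha> \<beta> \<Longrightarrow> orbit_invariants p = (0, - (\<alpha> * \<beta>))"
  by (auto simp: orbit2_def orbit_invariants_def exp_minus field_simps)

lemma orbit_invariants_if_orbit_of_eq_orbit3:
  "lam \<noteq> 0 \<Longrightarrow> orbit_of p = orbit3 \<rho> lam \<Longrightarrow> orbit_invariants p = (lam, \<rho> * lam)"
  using mem_orbit_of[of p] by (simp add: orbit_invariants_orbit3)

lemma orbit_invariants_if_orbit_of_eq_orbit2:
  "orbit_of p = orbit2 \<alpha> \<beta> \<Longrightarrow> orbit_invariants p = (0, - (\<alpha> * \<beta>))"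
  using mem_orbit_of[of p] by (simp add: orbit_invariants_orbit2)

lemma orbit_invariants_eq:
  assumes "orbit_of p = orbit_of q"
  shows "orbit_invariants p = orbit_invariants q"
proof -
  consider (orbit3) \<rho> lam where "lam \<noteq> 0" "orbit_of p = orbit3 \<rho> lam"
    | (orbit2) \<alpha> \<beta> where "orbit_of p = orbit2 \<alpha> \<beta>"
    | (orbit0) \<tau> where "orbit_of p = orbit0 \<tau>"
    using orbit_of_in_coadjoint_orbits[of p] unfolding coadjoint_orbits_def by blast
  then show ?thesis
  proof cases
    case orbit3
    then show ?thesis
      using assms orbit_invariants_if_orbit_of_eq_orbit3 by metis
  next
    case orbit2
    then show ?thesis
      using assms orbit_invariants_if_orbit_of_eq_orbit2 by metis
  next
    case orbit0
    then show ?thesis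
      using assms mem_orbit_of[of p] mem_orbit_of[of q] by (simp add: orbit0_def)
  qed
qed

lemma orbit_of_eq_d_zero:
  assumes "orbit_of (a', b', c', d') = orbit_of (a, b, c, 0)"
  obtains t where "d' = 0" "b' = exp t * b" "c' = exp (- t) * c" "b = 0 \<and> c = 0 \<longrightarrow> a' = a"
proof -
  have p: "(a, b, c, 0) \<in> orbit_of (a, b, c, 0)" and q: "(a', b', c', d') \<in> orbit_of (a, b, c, 0)"
    using assms mem_orbit_of by metis+
  consider (orbit3) \<rho> lam where "lam \<noteq> 0" "orbit_of (a, b, c, 0) = orbit3 \<rho> lam"
    | (orbit2) \<alpha> \<beta> where "(\<alpha>, \<beta>) \<noteq> (0, 0)" "orbit_of (a, b, c, 0) = orbit2 \<alpha> \<beta>"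
    | (orbit0) \<tau> where "orbit_of (a, b, c, 0) = orbit0 \<tau>"
    using orbit_of_in_coadjoint_orbits[of "(a, b, c, 0)"] unfolding coadjoint_orbits_def by blast
  then show ?thesis
  proof cases
    case orbit3
    then show ?thesis
      using p by (simp add: mem_orbit3)
  next
    case orbit2
    obtain s where s: "b = exp s * \<alpha>" "c = exp (- s) * \<beta>"
      using p orbit2(2) by (auto simp: mem_orbit2)
    obtain s' where s': "d' = 0" "b' = exp s' * \<alpha>" "c' = exp (- s') * \<beta>"
      using q orbit2(2) by (auto simp: mem_orbit2)
    show ?thesis
    proof (rule that[of "s' - s"])
      show "b' = exp (s' - s) * b" "c' = exp (- (s' - s)) * c"
        using s s' by (simp_all add: exp_diff exp_minus field_simps)
      show "b = 0 \<and> c = 0 \<longrightarrow> a' = a"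
        using s orbit2(1) by auto
    qed (use s' in simp)
  next
    case orbit0
    then show ?thesis
      using p q that[of 0] by (simp add: orbit0_def)
  qed
qed

definition orbit_saturated :: "gdual set \<Rightarrow> bool" where
  "orbit_saturated S \<longleftrightarrow> (\<forall>p \<in> S. \<forall>q. orbit_of q = orbit_of p \<longrightarrow> q \<in> S)"

lemma orbit_saturatedI:
  assumes "\<And>a b c d. d \<noteq> 0 \<Longrightarrow> (a, b, c, d) \<in> S"
    and "\<And>a b c a' t. (a, b, c, 0) \<in> S \<Longrightarrow> (b = 0 \<and> c = 0 \<longrightarrow> a' = a)
           \<Longrightarrow> (a', exp t * b, exp (- t) * c, 0) \<in> S"
  shows "orbit_saturated S"
  unfolding orbit_saturated_def
proof (intro ballI allI impI)
  fix p q assume "p \<in> S" "orbit_of q = orbit_of p"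
  obtain a b c d where p: "p = (a, b, c, d)" by (cases p)
  obtain a' b' c' d' where q: "q = (a', b', c', d')" by (cases q)
  show "q \<in> S"
  proof (cases "d = 0")
    case True
    then obtain t where "d' = 0" "b' = exp t * b" "c' = exp (- t) * c" "b = 0 \<and> c = 0 \<longrightarrow> a' = a"
      using orbit_of_eq_d_zero \<open>orbit_of q = orbit_of p\<close> unfolding p q by metis
    then show ?thesis
      using assms(2) \<open>p \<in> S\<close> True unfolding p q by blast
  next
    case False
    have "d' = d"
      using orbit_invariants_eq[OF \<open>orbit_of q = orbit_of p\<close>] unfolding p q orbit_invariants_def by simp
    then show ?thesis
      using assms(1) False unfolding q by blast
  qed
qed

lemma quotient_map_orbit_of: "quotient_map euclidean orbit_space orbit_of"
  unfolding orbit_space_def by (rule quotient_map_quotient_topology)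

lemma topspace_orbit_space: "topspace orbit_space = range orbit_of"
  using quotient_imp_surjective_map[OF quotient_map_orbit_of] by simp

lemma openin_orbit_space_image:
  assumes "open S" "orbit_saturated S"
  shows "openin orbit_space (orbit_of ` S)"
proof -
  have "{p \<in> topspace euclidean. orbit_of p \<in> orbit_of ` S} \<subseteq> S"
    using assms(2) unfolding orbit_saturated_def by force
  then show ?thesis
    using quotient_map_orbit_of assms(1) unfolding quotient_map_saturated_open by simp
qed

lemma orbit_of_in_image_iff: "orbit_saturated S \<Longrightarrow> orbit_of p \<in> orbit_of ` S \<longleftrightarrow> p \<in> S"
  unfolding orbit_saturated_def by blast

definition b_sign_region :: "real \<Rightarrow> gdual set" where
  "b_sign_region \<epsilon> = {(a, b, c, d). d \<noteq> 0 \<or> 0 < \<epsilon> * b}"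

definition c_sign_region :: "real \<Rightarrow> gdual set" where
  "c_sign_region \<sigma> = {(a, b, c, d). d \<noteq> 0 \<or> 0 < \<sigma> * c}"

definition axis_nbhd :: "real set \<Rightarrow> gdual set" where
  "axis_nbhd V = {(a, b, c, d). d \<noteq> 0 \<or> b \<noteq> 0 \<or> c \<noteq> 0 \<or> a \<in> V}"

lemma open_b_sign_region: "open (b_sign_region \<epsilon>)"
  unfolding b_sign_region_def case_prod_unfold
  by (intro open_Collect_disj open_Collect_neq open_Collect_less continuous_intros)

lemma open_c_sign_region: "open (c_sign_region \<sigma>)"
  unfolding c_sign_region_def case_prod_unfold
  by (intro open_Collect_disj open_Collect_neq open_Collect_less continuous_intros)

lemma open_axis_nbhd: "open V \<Longrightarrow> open (axis_nbhd V)"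
  unfolding axis_nbhd_def case_prod_unfold
  by (intro open_Collect_disj open_Collect_neq continuous_intros) (simp add: open_vimage_fst[unfolded vimage_def])

lemma zero_less_mult_exp_iff: "0 < x * (exp t * y) \<longleftrightarrow> 0 < x * (y::real)"
  by (simp add: mult.left_commute[of x] zero_less_mult_iff)

lemma orbit_saturated_b_sign_region: "orbit_saturated (b_sign_region \<epsilon>)"
  by (rule orbit_saturatedI) (auto simp: b_sign_region_def zero_less_mult_exp_iff)

lemma orbit_saturated_c_sign_region: "orbit_saturated (c_sign_region \<sigma>)"
  by (rule orbit_saturatedI) (auto simp: c_sign_region_def zero_less_mult_exp_iff)

lemma orbit_saturated_Int: "orbit_saturated S \<Longrightarrow> orbit_saturated T \<Longrightarrow> orbit_saturated (S \<inter> T)"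
  unfolding orbit_saturated_def by blast

lemma orbit_saturated_axis_nbhd: "orbit_saturated (axis_nbhd V)"
  by (rule orbit_saturatedI) (auto simp: axis_nbhd_def)

lemma Hausdorff_space_orbit_space_if_invariants_separate:
  assumes "\<And>p q. \<lbrakk>orbit_of p \<in> \<Gamma>; orbit_of q \<in> \<Gamma>; orbit_invariants p = orbit_invariants q\<rbrakk>
    \<Longrightarrow> orbit_of p = orbit_of q"
  shows "Hausdorff_space (subtopology orbit_space \<Gamma>)"
proof -
  have "continuous_map euclidean euclidean orbit_invariants"
    using continuous_orbit_invariants by simp
  then show ?thesis
  proof (rule Hausdorff_space_subtopology_quotient_map[OF quotient_map_orbit_of _ Hausdorff_space_euclidean])
    show "\<And>p q. \<lbrakk>p \<in> topspace euclidean; q \<in> topspace euclidean; orbit_of p = orbit_of q\<rbrakk>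
      \<Longrightarrow> orbit_invariants p = orbit_invariants q"
      by (rule orbit_invariants_eq)
    show "\<And>p q. \<lbrakk>p \<in> topspace euclidean; q \<in> topspace euclidean; orbit_of p \<in> \<Gamma>; orbit_of q \<in> \<Gamma>;
        orbit_invariants p = orbit_invariants q\<rbrakk> \<Longrightarrow> orbit_of p = orbit_of q"
      by (rule assms)
  qed
qed

lemma Hausdorff_Gamma3: "Hausdorff_space (subtopology orbit_space Gamma3)"
proof (rule Hausdorff_space_orbit_space_if_invariants_separate)
  fix p q assume "orbit_of p \<in> Gamma3" "orbit_of q \<in> Gamma3" and eq: "orbit_invariants p = orbit_invariants q"
  then obtain \<rho> lam \<rho>' lam' where p: "lam \<noteq> 0" "orbit_of p = orbit3 \<rho> lam"
    and q: "lam' \<noteq> 0" "orbit_of q = orbit3 \<rho>' lam'"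
    unfolding Gamma3_def by blast
  have "(lam, \<rho> * lam) = orbit_invariants p"
    by (rule orbit_invariants_if_orbit_of_eq_orbit3[OF p, symmetric])
  also note eq
  also have "orbit_invariants q = (lam', \<rho>' * lam')"
    by (rule orbit_invariants_if_orbit_of_eq_orbit3[OF q])
  finally have "lam = lam' \<and> \<rho> = \<rho>'"
    using p(1) by auto
  then show "orbit_of p = orbit_of q"
    using p q by simp
qed

lemma Hausdorff_Gamma2es:
  assumes "\<epsilon> \<noteq> 0" "\<sigma> \<noteq> 0"
  shows "Hausdorff_space (subtopology orbit_space (Gamma2es \<epsilon> \<sigma>))"
proof (rule Hausdorff_space_orbit_space_if_invariants_separate)
  fix p q assume "orbit_of p \<in> Gamma2es \<epsilon> \<sigma>" "orbit_of q \<in> Gamma2es \<epsilon> \<sigma>"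
    and eq: "orbit_invariants p = orbit_invariants q"
  then obtain r r' where p: "orbit_of p = orbit2 (\<epsilon> * r) \<sigma>" and q: "orbit_of q = orbit2 (\<epsilon> * r') \<sigma>"
    unfolding Gamma2es_def by blast
  have "(0, - (\<epsilon> * r * \<sigma>)) = orbit_invariants p"
    by (rule orbit_invariants_if_orbit_of_eq_orbit2[OF p, symmetric])
  also note eq
  also have "orbit_invariants q = (0, - (\<epsilon> * r' * \<sigma>))"
    by (rule orbit_invariants_if_orbit_of_eq_orbit2[OF q])
  finally have "r = r'"
    using assms by simp
  then show "orbit_of p = orbit_of q"
    using p q by simp
qed

lemma Gamma2es_eq_sign_regions:
  assumes "\<epsilon> \<in> {1, -1}" "\<sigma> \<in> {1, -1}"
  shows "Gamma2es \<epsilon> \<sigma> = orbit_of ` (b_sign_region \<epsilon> \<inter> c_sign_region \<sigma>) \<inter> Gamma2"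
proof -
  let ?R = "b_sign_region \<epsilon> \<inter> c_sign_region \<sigma>"
  have sat: "orbit_saturated ?R"
    by (intro orbit_saturated_Int orbit_saturated_b_sign_region orbit_saturated_c_sign_region)
  have mem: "orbit2 (e * r) s \<in> orbit_of ` ?R \<longleftrightarrow> 0 < \<epsilon> * (e * r) \<and> 0 < \<sigma> * s" if "s \<noteq> 0" for e r s
    using that orbit_of_in_image_iff[OF sat] orbit2_eq_orbit_of[of "e * r" s]
    by (simp add: b_sign_region_def c_sign_region_def)
  show ?thesis
  proof
    show "Gamma2es \<epsilon> \<sigma> \<subseteq> orbit_of ` ?R \<inter> Gamma2"
    proof
      fix Q assume "Q \<in> Gamma2es \<epsilon> \<sigma>"
      then obtain r where "r > 0" "Q = orbit2 (\<epsilon> * r) \<sigma>"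
        unfolding Gamma2es_def by blast
      moreover have "0 < \<epsilon> * (\<epsilon> * r)" "0 < \<sigma> * \<sigma>" "\<sigma> \<noteq> 0"
        using assms \<open>r > 0\<close> by auto
      ultimately have "Q \<in> orbit_of ` ?R"
        using mem[of \<sigma> \<epsilon> r] by simp
      moreover have "Q \<in> Gamma2"
        using \<open>Q \<in> Gamma2es \<epsilon> \<sigma>\<close> assms unfolding Gamma2_def by blast
      ultimately show "Q \<in> orbit_of ` ?R \<inter> Gamma2"
        by blast
    qed
    show "orbit_of ` ?R \<inter> Gamma2 \<subseteq> Gamma2es \<epsilon> \<sigma>"
    proof
      fix Q assume Q: "Q \<in> orbit_of ` ?R \<inter> Gamma2"
      then obtain e s r where es: "e \<in> {1, -1}" "s \<in> {1, -1}" and "r > 0" "Q = orbit2 (e * r) s"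
        unfolding Gamma2_def Gamma2es_def by blast
      moreover have "s \<noteq> 0"
        using es by auto
      ultimately have "0 < \<epsilon> * (e * r)" "0 < \<sigma> * s"
        using Q mem[of s e r] by auto
      with es assms \<open>r > 0\<close> have "e = \<epsilon>" "s = \<sigma>"
        by (auto simp: zero_less_mult_iff)
      with \<open>r > 0\<close> \<open>Q = orbit2 (e * r) s\<close> show "Q \<in> Gamma2es \<epsilon> \<sigma>"
        unfolding Gamma2es_def by blast
    qed
  qed
qed

lemma openin_Gamma2es:
  assumes "\<epsilon> \<in> {1, -1}" "\<sigma> \<in> {1, -1}"
  shows "openin (subtopology orbit_space Gamma2) (Gamma2es \<epsilon> \<sigma>)"
  unfolding Gamma2es_eq_sign_regions[OF assms]
  by (intro openin_subtopology_Int openin_orbit_space_image open_Int open_b_sign_region open_c_sign_region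
      orbit_saturated_Int orbit_saturated_b_sign_region orbit_saturated_c_sign_region)

lemma orbit2_image_iff:
  "(\<alpha>, \<beta>) \<noteq> (0, 0) \<Longrightarrow> orbit_saturated S \<Longrightarrow> orbit2 \<alpha> \<beta> \<in> orbit_of ` S \<longleftrightarrow> (0, \<alpha>, \<beta>, 0) \<in> S"
  using orbit2_eq_orbit_of orbit_of_in_image_iff by metis

lemma b_sign_region_Int_Gamma1:
  assumes "e \<in> {1, -1}"
  shows "orbit_of ` b_sign_region e \<inter> Gamma1 = {orbit2 e 0}"
proof -
  have "orbit2 \<alpha> \<beta> \<in> orbit_of ` b_sign_region e \<longleftrightarrow> 0 < e * \<alpha>" if "(\<alpha>, \<beta>) \<noteq> (0, 0)" for \<alpha> \<beta>
    using orbit2_image_iff[OF that orbit_saturated_b_sign_region] by (simp add: b_sign_region_def)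
  then show ?thesis
    using assms unfolding Gamma1_def by (auto simp: Int_insert_right)
qed

lemma c_sign_region_Int_Gamma1:
  assumes "e \<in> {1, -1}"
  shows "orbit_of ` c_sign_region e \<inter> Gamma1 = {orbit2 0 e}"
proof -
  have "orbit2 \<alpha> \<beta> \<in> orbit_of ` c_sign_region e \<longleftrightarrow> 0 < e * \<beta>" if "(\<alpha>, \<beta>) \<noteq> (0, 0)" for \<alpha> \<beta>
    using orbit2_image_iff[OF that orbit_saturated_c_sign_region] by (simp add: c_sign_region_def)
  then show ?thesis
    using assms unfolding Gamma1_def by (auto simp: Int_insert_right)
qed

lemma discrete_Gamma1: "subtopology orbit_space Gamma1 = discrete_topology Gamma1"
proof -
  have "Gamma1 \<subseteq> range orbit_of"
    using orbit2_eq_orbit_of unfolding Gamma1_def by auto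
  then have "topspace (subtopology orbit_space Gamma1) = Gamma1"
    by (auto simp: topspace_orbit_space)
  moreover have "openin (subtopology orbit_space Gamma1) {orbit2 e 0}" if "e \<in> {1, -1}" for e
    using openin_subtopology_Int[OF openin_orbit_space_image[OF open_b_sign_region orbit_saturated_b_sign_region]]
      b_sign_region_Int_Gamma1[OF that] by metis
  moreover have "openin (subtopology orbit_space Gamma1) {orbit2 0 e}" if "e \<in> {1, -1}" for e
    using openin_subtopology_Int[OF openin_orbit_space_image[OF open_c_sign_region orbit_saturated_c_sign_region]]
      c_sign_region_Int_Gamma1[OF that] by metis
  ultimately have "discrete_topology Gamma1 = subtopology orbit_space Gamma1"
    unfolding discrete_topology_unique by (simp add: Gamma1_def)
  then show ?thesis
    by simp
qed

lemma axis_nbhd_Int_Gamma0: "orbit_of ` axis_nbhd V \<inter> Gamma0 = orbit0 ` V"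
proof -
  have "orbit0 \<tau> \<in> orbit_of ` axis_nbhd V \<longleftrightarrow> \<tau> \<in> V" for \<tau>
    unfolding orbit0_eq_orbit_of orbit_of_in_image_iff[OF orbit_saturated_axis_nbhd]
    by (simp add: axis_nbhd_def)
  then show ?thesis
    unfolding Gamma0_def by blast
qed

lemma homeomorphic_map_orbit0: "homeomorphic_map euclideanreal (subtopology orbit_space Gamma0) orbit0"
proof (rule bijective_open_imp_homeomorphic_map)
  have "orbit0 = orbit_of \<circ> (\<lambda>\<tau>. (\<tau>, 0, 0, 0))"
    using orbit0_eq_orbit_of by auto
  moreover have "continuous_map euclideanreal euclidean (\<lambda>\<tau>::real. (\<tau>, 0::real, 0::real, 0::real))"
    by (simp add: continuous_intros)
  ultimately have "continuous_map euclideanreal orbit_space orbit0"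
    using continuous_map_compose quotient_imp_continuous_map[OF quotient_map_orbit_of] by metis
  then show "continuous_map euclideanreal (subtopology orbit_space Gamma0) orbit0"
    by (simp add: continuous_map_in_subtopology Gamma0_def)
  show "orbit0 ` topspace euclideanreal = topspace (subtopology orbit_space Gamma0)"
    by (auto simp: topspace_orbit_space Gamma0_def orbit0_eq_orbit_of)
  show "inj_on orbit0 (topspace euclideanreal)"
    by (simp add: inj_on_def orbit0_def)
  show "open_map euclideanreal (subtopology orbit_space Gamma0) orbit0"
    unfolding open_map_def axis_nbhd_Int_Gamma0[symmetric]
    by (auto intro!: openin_subtopology_Int openin_orbit_space_image open_axis_nbhd orbit_saturated_axis_nbhd)
qed

theorem proposition2p2:
  shows "Hausdorff_space (subtopology orbit_space Gamma3)
    \<and> (\<forall>\<epsilon>\<in>{1, -1::real}. \<forall>\<sigma>\<in>{1, -1::real}.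
          openin (subtopology orbit_space Gamma2) (Gamma2es \<epsilon> \<sigma>)
          \<and> Hausdorff_space (subtopology orbit_space (Gamma2es \<epsilon> \<sigma>)))
    \<and> subtopology orbit_space Gamma1 = discrete_topology Gamma1
    \<and> homeomorphic_map euclideanreal (subtopology orbit_space Gamma0) orbit0"
  using Hausdorff_Gamma3 openin_Gamma2es Hausdorff_Gamma2es discrete_Gamma1 homeomorphic_map_orbit0
  by auto

end
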